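(* Let $m\ge1$, $\Sigma=\{1,\ldots,m\}$, and let $\mu:\Sigma^*\to\Sigma^*$ be a morphism with $\mu(1)=1x$ for some $x\in\Sigma^+$, $|\mu(a)|>1$ for all $a\in\Sigma$, and frequency matrix $M$ non-singular with $|M^{-1}|<1$. Let $k$ be a positive integer and let $T_k=[\epsilon,\ldots,\epsilon,\vec 0,\ldots,\vec 0]$ be the $k$-template with $a_1=\cdots=a_{k+1}=\epsilon$ and $d_1=\cdots=d_{k-1}=\vec 0$. Then $T_k$ has only finitely many ancestors.
   Context: The Parikh map $\psi:\Sigma^*\to\mathbb{Z}^m$ is $\psi(w)=[|w|_1,\ldots,|w|_m]$ (row vector). The frequency matrix $M$ of $\mu$ has $M_{i,j}=|\mu(i)|_j$. For a real matrix $A$, $|A|=\sup_{v\neq0}|vA|/|v|$ with Euclidean norm on row vectors. A $k$-template is a $2k$-tuple $t=[a_1,\ldots,a_{k+1},d_1,\ldots,d_{k-1}]$ with each $a_i\in\{\epsilon,1,\ldots,m\}$ ($\epsilon$ the empty word) and each $d_i\in\mathbb{Z}^m$. Given $k$-templates $t_1=[a_1,\ldots,a_{k+1},d_1,\ldots,d_{k-1}]$ and $t_2=[A_1,\ldots,A_{k+1},D_1,\ldots,D_{k-1}]$, $t_2$ is a parent of $t_1$ if there are words $a_i',a_i''$ ($1\le i\le k+1$) with $\mu(A_i)=a_i'a_ia_i''$ for each $i$ and $\psi(a_{i+1}''a_{i+2}')-\psi(a_i''a_{i+1}')+D_iM=d_i$ for $1\le i\le k-1$. The ancestor relation is the transitive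 closure of the parent relation. *)

theory Defs
  imports "HOL-Analysis.Analysis"
begin

text \<open>The alphabet Sigma = {1..m} is modelled by a finite type 'a (m = CARD('a) >= 1);
words are lists; a morphism is given by its values on letters.\<close>

definition morph :: "('a \<Rightarrow> 'a list) \<Rightarrow> 'a list \<Rightarrow> 'a list" where
  "morph \<mu> w = concat (map \<mu> w)"

definition parikh :: "'a::finite list \<Rightarrow> int ^ 'a" where
  "parikh w = (\<chi> j. int (count_list w j))"

definition freq_matrix :: "('a::finite \<Rightarrow> 'a list) \<Rightarrow> int ^ 'a ^ 'a" where
  "freq_matrix \<mu> = (\<chi> i j. int (count_list (\<mu> i) j))"

text \<open>A template entry a_i in {epsilon, 1..m} is an 'a option (None = empty word).
A k-template is a pair (list of k+1 entries a_1..a_{k+1}, list of k-1 vectors d_1..d_{k-1}).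
Indices are 0-based in the lists.\<close>
type_synonym 'a template = "'a option list \<times> (int ^ 'a) list"

definition letter_word :: "'a option \<Rightarrow> 'a list" where
  "letter_word a = (case a of None \<Rightarrow> [] | Some c \<Rightarrow> [c])"

definition is_template :: "nat \<Rightarrow> 'a template \<Rightarrow> bool" where
  "is_template k t \<longleftrightarrow> length (fst t) = k + 1 \<and> length (snd t) = k - 1"

definition is_parent :: "('a::finite \<Rightarrow> 'a list) \<Rightarrow> nat \<Rightarrow> 'a template \<Rightarrow> 'a template \<Rightarrow> bool" where
  "is_parent \<mu> k t2 t1 \<longleftrightarrow> is_template k t1 \<and> is_template k t2 \<and>
     (\<exists>a' a'' :: nat \<Rightarrow> 'a list.
        (\<forall>i < k + 1. morph \<mu> (letter_word (fst t2 ! i)) = a' i @ letter_word (fst t1 ! i) @ a'' i) \<and>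
        (\<forall>i < k - 1. parikh (a'' (i+1) @ a' (i+2)) - parikh (a'' i @ a' (i+1))
                      + (snd t2 ! i) v* freq_matrix \<mu> = snd t1 ! i))"

definition ancestors :: "('a::finite \<Rightarrow> 'a list) \<Rightarrow> nat \<Rightarrow> 'a template \<Rightarrow> 'a template set" where
  "ancestors \<mu> k t = {t2. (t, t2) \<in> {(t1, t2). is_parent \<mu> k t2 t1}\<^sup>+}"

definition T_template :: "nat \<Rightarrow> ('a::finite) template" where
  "T_template k = (replicate (k + 1) None, replicate (k - 1) 0)"

end

theory Submission
  imports Defs
begin

text \<open>Unfolding the parent relation, the displacement vector D of a parent is tied to that
of its child d by D M = d - c, where c is a difference of Parikh vectors of words of length
at most 2L (L the longest image of a letter). Hence |D| \<le> \<lambda> (|d| + |c|) with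
\<lambda> = |M^-1| < 1, so the ball of radius 2 m L / (1 - \<lambda>) is closed under taking parents.
All ancestors of T_k therefore have displacement vectors in a fixed ball, which contains only
finitely many integer vectors, while the letter entries range over a finite set.\<close>

definition of_int_vec :: "int ^ 'n \<Rightarrow> real ^ 'n" where
  "of_int_vec x = (\<chi> j. real_of_int (x $ j))"

lemma of_int_vec_0 [simp]: "of_int_vec 0 = 0"
  unfolding of_int_vec_def by (simp add: vec_eq_iff)

lemma of_int_vec_diff: "of_int_vec (x - y) = of_int_vec x - of_int_vec y"
  unfolding of_int_vec_def by (simp add: vec_eq_iff)

lemma of_int_vec_vector_matrix_mult:
  "of_int_vec (x v* (A :: int ^ 'm ^ 'n::finite)) = of_int_vec x v* map_matrix real_of_int A"
  unfolding of_int_vec_def vector_matrix_mult_def by (simp add: vec_eq_iff)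

lemma norm_of_int_vec_le:
  fixes x :: "int ^ 'n::finite"
  assumes "\<And>j. \<bar>x $ j\<bar> \<le> K"
  shows "norm (of_int_vec x) \<le> real CARD('n) * real_of_int K"
proof -
  have "norm (of_int_vec x) \<le> (\<Sum>j\<in>UNIV. \<bar>of_int_vec x $ j\<bar>)"
    by (rule norm_le_l1_cart)
  also have "\<dots> \<le> real CARD('n) * real_of_int K"
    using assms by (intro sum_bounded_above) (simp add: of_int_vec_def flip: of_int_abs)
  finally show ?thesis .
qed

lemma finite_norm_of_int_vec_le: "finite {x :: int ^ 'n::finite. norm (of_int_vec x) \<le> B}"
proof -
  define N where "N = \<lceil>B\<rceil>"
  have "{x :: int ^ 'n. norm (of_int_vec x) \<le> B} \<subseteq> vec_lambda ` (UNIV \<rightarrow>\<^sub>E {-N..N})"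
  proof
    fix x :: "int ^ 'n" assume "x \<in> {x. norm (of_int_vec x) \<le> B}"
    then have "\<bar>x $ j\<bar> \<le> N" for j
      using component_le_norm_cart[of "of_int_vec x" j]
      by (simp add: of_int_vec_def N_def le_ceiling_iff)
    then have "vec_nth x \<in> UNIV \<rightarrow>\<^sub>E {-N..N}"
      by (auto simp: abs_le_iff minus_le_iff)
    then show "x \<in> vec_lambda ` (UNIV \<rightarrow>\<^sub>E {-N..N})"
      by (metis image_eqI vec_lambda_eta)
  qed
  then show ?thesis
    by (rule finite_subset) (simp add: finite_PiE)
qed

lemma bounded_linear_vector_matrix_mult: "bounded_linear (\<lambda>x :: real ^ 'n. x v* A)"
proof -
  have "(\<lambda>x :: real ^ 'n. x v* A) = (*v) (transpose A)"
    by auto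
  then show ?thesis
    by simp
qed

lemma matrix_inv_right: "invertible A \<Longrightarrow> A ** matrix_inv A = mat 1"
  unfolding invertible_def matrix_inv_def by (rule someI2_ex) auto

lemma norm_le_onorm_matrix_inv:
  fixes A :: "real ^ 'm ^ 'n::finite"
  assumes "invertible A"
  shows "norm x \<le> onorm (\<lambda>y. y v* matrix_inv A) * norm (x v* A)"
proof -
  have "x = (x v* A) v* matrix_inv A"
    by (simp add: vector_matrix_mul_assoc matrix_inv_right[OF assms])
  also have "norm \<dots> \<le> onorm (\<lambda>y. y v* matrix_inv A) * norm (x v* A)"
    by (rule onorm[OF bounded_linear_vector_matrix_mult])
  finally show ?thesis .
qed

definition max_image_length :: "('a::finite \<Rightarrow> 'b list) \<Rightarrow> nat" where
  "max_image_length \<mu> = Max (range (\<lambda>a. length (\<mu> a)))"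

lemma length_morph_letter_word_le: "length (morph \<mu> (letter_word a)) \<le> max_image_length \<mu>"
  by (cases a) (auto simp: morph_def letter_word_def max_image_length_def)

lemma abs_parikh_diff_le:
  assumes "length u \<le> n" and "length v \<le> n"
  shows "\<bar>(parikh u - parikh v) $ j\<bar> \<le> int n"
  using count_le_length[of u j] count_le_length[of v j] assms
  by (simp add: parikh_def)

lemma parent_displacement:
  fixes \<mu> :: "'a::finite \<Rightarrow> 'a list"
  assumes "is_parent \<mu> k t2 t1" and "i < k - 1"
  obtains c where "snd t2 ! i v* freq_matrix \<mu> = snd t1 ! i - c"
    and "\<And>j. \<bar>c $ j\<bar> \<le> int (2 * max_image_length \<mu>)"
proof -
  define L where "L = max_image_length \<mu>"
  obtain a' a'' :: "nat \<Rightarrow> 'a list" where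
    factor: "\<forall>i < k + 1. morph \<mu> (letter_word (fst t2 ! i)) = a' i @ letter_word (fst t1 ! i) @ a'' i"
    and drift: "\<forall>i < k - 1. parikh (a'' (i+1) @ a' (i+2)) - parikh (a'' i @ a' (i+1))
                  + snd t2 ! i v* freq_matrix \<mu> = snd t1 ! i"
    using assms(1) unfolding is_parent_def by blast
  have short: "length (a' l) \<le> L \<and> length (a'' l) \<le> L" if "l < k + 1" for l
    using length_morph_letter_word_le[of \<mu> "fst t2 ! l"] factor that by (auto simp: L_def)
  define c where "c = parikh (a'' (i+1) @ a' (i+2)) - parikh (a'' i @ a' (i+1))"
  have "snd t2 ! i v* freq_matrix \<mu> = snd t1 ! i - c"
    using drift assms(2) by (auto simp: c_def algebra_simps)
  moreover have "\<bar>c $ j\<bar> \<le> int (2 * L)" for j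
  proof -
    have "i + 2 < k + 1"
      using assms(2) by simp
    then show ?thesis
      unfolding c_def using short[of i] short[of "i+1"] short[of "i+2"]
      by (intro abs_parikh_diff_le) auto
  qed
  ultimately show thesis
    using that by (simp add: L_def)
qed

definition bounded_template :: "nat \<Rightarrow> real \<Rightarrow> 'a::finite template \<Rightarrow> bool" where
  "bounded_template k B t \<longleftrightarrow> is_template k t \<and> (\<forall>d \<in> set (snd t). norm (of_int_vec d) \<le> B)"

lemma finite_bounded_templates: "finite {t :: 'a::finite template. bounded_template k B t}"
proof (rule finite_subset)
  show "{t. bounded_template k B t} \<subseteq>
      {as. set as \<subseteq> UNIV \<and> length as = k + 1}
      \<times> {ds. set ds \<subseteq> {d. norm (of_int_vec d) \<le> B} \<and> length ds = k - 1}"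
    by (auto simp: bounded_template_def is_template_def)
  show "finite \<dots>"
    by (intro finite_cartesian_product finite_lists_length_eq finite_norm_of_int_vec_le) simp
qed

lemma parent_preserves_bounded_template:
  fixes \<mu> :: "'a::finite \<Rightarrow> 'a list"
  defines "M \<equiv> map_matrix real_of_int (freq_matrix \<mu>)"
  assumes "invertible M"
    and "onorm (\<lambda>v. v v* matrix_inv M) * (B + real CARD('a) * (2 * max_image_length \<mu>)) \<le> B"
    and "is_parent \<mu> k t2 t1" and "bounded_template k B t1"
  shows "bounded_template k B t2"
proof -
  define lam where "lam = onorm (\<lambda>v. v v* matrix_inv M)"
  define C where "C = real CARD('a) * (2 * max_image_length \<mu>)"
  have templates: "is_template k t1" "is_template k t2"
    using assms(4) unfolding is_parent_def by auto
  have "norm (of_int_vec (snd t2 ! i)) \<le> B" if i: "i < k - 1" for i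
  proof -
    obtain c where c: "snd t2 ! i v* freq_matrix \<mu> = snd t1 ! i - c"
      and "\<And>j. \<bar>c $ j\<bar> \<le> int (2 * max_image_length \<mu>)"
      using parent_displacement[OF assms(4) i] by blast
    then have "norm (of_int_vec c) \<le> C"
      using norm_of_int_vec_le by (fastforce simp: C_def)
    moreover have "norm (of_int_vec (snd t1 ! i)) \<le> B"
      using assms(5) templates(1) i by (auto simp: bounded_template_def is_template_def)
    ultimately have "norm (of_int_vec (snd t1 ! i - c)) \<le> B + C"
      unfolding of_int_vec_diff by (smt (verit) norm_triangle_ineq4)
    have "norm (of_int_vec (snd t2 ! i)) \<le> lam * norm (of_int_vec (snd t2 ! i) v* M)"
      unfolding lam_def by (rule norm_le_onorm_matrix_inv[OF assms(2)])
    also have "\<dots> = lam * norm (of_int_vec (snd t1 ! i - c))"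
      by (simp add: M_def flip: of_int_vec_vector_matrix_mult c)
    also have "\<dots> \<le> lam * (B + C)"
      using \<open>norm (of_int_vec (snd t1 ! i - c)) \<le> B + C\<close>
      unfolding lam_def by (intro mult_left_mono onorm_pos_le[OF bounded_linear_vector_matrix_mult])
    also have "\<dots> \<le> B"
      using assms(3) by (simp add: lam_def C_def)
    finally show ?thesis .
  qed
  then show ?thesis
    using templates(2) by (auto simp: bounded_template_def is_template_def in_set_conv_nth)
qed

lemma ancestors_bounded_template:
  fixes \<mu> :: "'a::finite \<Rightarrow> 'a list"
  defines "M \<equiv> map_matrix real_of_int (freq_matrix \<mu>)"
  assumes "invertible M"
    and "onorm (\<lambda>v. v v* matrix_inv M) * (B + real CARD('a) * (2 * max_image_length \<mu>)) \<le> B"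
    and "bounded_template k B t"
  shows "ancestors \<mu> k t \<subseteq> {t. bounded_template k B t}"
proof
  fix t' assume "t' \<in> ancestors \<mu> k t"
  then have "(t, t') \<in> {(t1, t2). is_parent \<mu> k t2 t1}\<^sup>+"
    by (simp add: ancestors_def)
  then show "t' \<in> {t. bounded_template k B t}"
    using assms(4) parent_preserves_bounded_template[OF assms(2,3)[unfolded M_def]]
    by (induction rule: trancl_induct) auto
qed

lemma bounded_template_T_template: "B \<ge> 0 \<Longrightarrow> bounded_template k B (T_template k)"
  by (simp add: bounded_template_def is_template_def T_template_def)

lemma contraction_invariant_radius:
  fixes lam C :: real
  assumes "0 \<le> lam" and "lam < 1" and "0 \<le> C"
  shows "0 \<le> C / (1 - lam)" and "lam * (C / (1 - lam) + C) \<le> C / (1 - lam)"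
proof -
  show "0 \<le> C / (1 - lam)"
    using assms by simp
  have "lam * C \<le> C"
    using assms by (intro mult_left_le_one_le) auto
  moreover have "C / (1 - lam) = lam * (C / (1 - lam)) + C"
    using assms(2) by (simp add: field_simps)
  ultimately show "lam * (C / (1 - lam) + C) \<le> C / (1 - lam)"
    unfolding distrib_left by linarith
qed

theorem lemma4:
  fixes \<mu> :: "'a::finite \<Rightarrow> 'a list" and one :: 'a and k :: nat
  assumes "\<exists>x. x \<noteq> [] \<and> \<mu> one = one # x"
    and "\<forall>a. length (\<mu> a) > 1"
    and "invertible (map_matrix real_of_int (freq_matrix \<mu>))"
    and "onorm (\<lambda>v::real^'a. v v* matrix_inv (map_matrix real_of_int (freq_matrix \<mu>))) < 1"
    and "k > 0"
  shows "finite (ancestors \<mu> k (T_template k))"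
proof -
  define lam where "lam = onorm (\<lambda>v::real^'a. v v* matrix_inv (map_matrix real_of_int (freq_matrix \<mu>)))"
  define C where "C = real CARD('a) * (2 * max_image_length \<mu>)"
  have "0 \<le> lam" "lam < 1" "0 \<le> C"
    using assms(4) onorm_pos_le[OF bounded_linear_vector_matrix_mult]
    by (auto simp: lam_def C_def)
  note radius = contraction_invariant_radius[OF this]
  have "ancestors \<mu> k (T_template k) \<subseteq> {t. bounded_template k (C / (1 - lam)) t}"
    using assms(3) radius(2) bounded_template_T_template[OF radius(1)]
    by (intro ancestors_bounded_template) (simp_all add: lam_def C_def)
  then show ?thesis
    using finite_bounded_templates finite_subset by blast
qed

end
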